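(* For any $F\in\mathscr{F}_2$ and $i\in[F]$, the map $f_i$ is injective.
   Context: $\mathcal{S}$ is a finite source alphabet with $|\mathcal{S}|\ge 2$ and $\mathcal{C}=\{0,1\}$; $\mathcal{A}^k,\mathcal{A}^{\ast},\mathcal{A}^{+}$ are sequences of length $k$, finite, positive finite length; $\lambda$ empty sequence; $\preceq$ prefix, $\prec$ proper prefix; $\mathrm{suff}(x_1\cdots x_n)=x_2\cdots x_n$. A code-tuple $F$ with $m\ge1$ code tables consists of maps $f_i:\mathcal{S}\to\mathcal{C}^{\ast}$ and $\tau_i:\mathcal{S}\to\{0,\dots,m-1\}$, $i\in[F]=\{0,\dots,m-1\}$. $f_i^{\ast}(\lambda)=\lambda$, $f_i^{\ast}(\pmb{x})=f_i(x_1)f^{\ast}_{\tau_i(x_1)}(\mathrm{suff}(\pmb{x}))$. For integer $k\ge0$, $\pmb{b}\in\mathcal{C}^{\ast}$: $\mathcal{P}^k_{F,i}(\pmb{b})$ is the set of $\pmb{c}\in\mathcal{C}^k$ such that some $\pmb{x}=x_1\cdots x_n\in\mathcal{S}^{+}$ has $f_i^{\ast}(\pmb{x})\succeq\pmb{b}\pmb{c}$ and $f_i(x_1)\succeq\pmb{b}$; $\bar{\mathcal{P}}^k_{F,i}(\pmb{b})$ the same with $f_i(x_1)\succ\pmb{b}$; $\mathcal{P}^k_{F,i}=\mathcal{P}^k_{F,i}(\lambda)$. $F\in\mathscr{F}_{2\text{-}\mathrm{dec}}$ if $\mathcal{P}^2_{F,\tau_i(s)}\cap\bar{\mathcal{P}}^2_{F,i}(f_i(s))=\emptyset$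 for all $i,s$, and $\mathcal{P}^2_{F,\tau_i(s)}\cap\mathcal{P}^2_{F,\tau_i(s')}=\emptyset$ whenever $s\ne s'$, $f_i(s)=f_i(s')$. Fix $\mu:\mathcal{S}\to(0,1]$ with $\sum_s\mu(s)=1$; $Q_{i,j}(F)=\sum_{s:\tau_i(s)=j}\mu(s)$; $F\in\mathscr{F}_{\mathrm{reg}}$ if $\pmb{\pi}Q(F)=\pmb{\pi}$, $\sum_i\pi_i=1$ has a unique solution. $\mathscr{F}_2=\{F\in\mathscr{F}_{\mathrm{reg}}\cap\mathscr{F}_{2\text{-}\mathrm{dec}}:|\mathcal{P}^2_{F,i}|\ge3\ \forall i\in[F]\}$. *)

theory Defs
  imports Complex_Main "HOL-Library.Sublist"
begin

text \<open>Source alphabet: a finite type 'a. Code alphabet {0,1}: bool.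
 A code-tuple with m code tables: m, f :: nat => 'a => bool list, tau :: nat => 'a => nat;
 table indices are [F] = {0..<m}.\<close>

definition code_tuple :: "nat \<Rightarrow> (nat \<Rightarrow> 'a \<Rightarrow> bool list) \<Rightarrow> (nat \<Rightarrow> 'a \<Rightarrow> nat) \<Rightarrow> bool" where
  "code_tuple m f \<tau> \<longleftrightarrow> m \<ge> 1 \<and> (\<forall>i<m. \<forall>s. \<tau> i s < m)"

fun fstar :: "(nat \<Rightarrow> 'a \<Rightarrow> bool list) \<Rightarrow> (nat \<Rightarrow> 'a \<Rightarrow> nat) \<Rightarrow> nat \<Rightarrow> 'a list \<Rightarrow> bool list" where
  "fstar f \<tau> i [] = []"
| "fstar f \<tau> i (x # xs) = f i x @ fstar f \<tau> (\<tau> i x) xs"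

definition Pset :: "(nat \<Rightarrow> 'a \<Rightarrow> bool list) \<Rightarrow> (nat \<Rightarrow> 'a \<Rightarrow> nat) \<Rightarrow> nat \<Rightarrow> nat \<Rightarrow> bool list \<Rightarrow> bool list set" where
  "Pset f \<tau> k i b = {c. length c = k \<and> (\<exists>x. x \<noteq> [] \<and> prefix (b @ c) (fstar f \<tau> i x) \<and> prefix b (f i (hd x)))}"

definition Pbar :: "(nat \<Rightarrow> 'a \<Rightarrow> bool list) \<Rightarrow> (nat \<Rightarrow> 'a \<Rightarrow> nat) \<Rightarrow> nat \<Rightarrow> nat \<Rightarrow> bool list \<Rightarrow> bool list set" where
  "Pbar f \<tau> k i b = {c. length c = k \<and> (\<exists>x. x \<noteq> [] \<and> prefix (b @ c) (fstar f \<tau> i x) \<and> strict_prefix b (f i (hd x)))}"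

definition two_dec :: "nat \<Rightarrow> (nat \<Rightarrow> 'a \<Rightarrow> bool list) \<Rightarrow> (nat \<Rightarrow> 'a \<Rightarrow> nat) \<Rightarrow> bool" where
  "two_dec m f \<tau> \<longleftrightarrow>
     (\<forall>i<m. \<forall>s. Pset f \<tau> 2 (\<tau> i s) [] \<inter> Pbar f \<tau> 2 i (f i s) = {}) \<and>
     (\<forall>i<m. \<forall>s s'. s \<noteq> s' \<and> f i s = f i s' \<longrightarrow> Pset f \<tau> 2 (\<tau> i s) [] \<inter> Pset f \<tau> 2 (\<tau> i s') [] = {})"

definition Qmat :: "('a::finite \<Rightarrow> real) \<Rightarrow> (nat \<Rightarrow> 'a \<Rightarrow> nat) \<Rightarrow> nat \<Rightarrow> nat \<Rightarrow> real" where
  "Qmat \<mu> \<tau> i j = (\<Sum>s\<in>{s. \<tau> i s = j}. \<mu> s)"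

text \<open>Regularity: pi Q = pi, sum pi = 1 has a unique solution pi in R^[F]
 (vectors represented as functions nat => real vanishing outside {0..<m}).\<close>
definition regular :: "('a::finite \<Rightarrow> real) \<Rightarrow> nat \<Rightarrow> (nat \<Rightarrow> 'a \<Rightarrow> nat) \<Rightarrow> bool" where
  "regular \<mu> m \<tau> \<longleftrightarrow>
     (\<exists>!\<pi>::nat \<Rightarrow> real. (\<forall>j. m \<le> j \<longrightarrow> \<pi> j = 0) \<and>
        (\<forall>j<m. (\<Sum>i<m. \<pi> i * Qmat \<mu> \<tau> i j) = \<pi> j) \<and> (\<Sum>i<m. \<pi> i) = 1)"

definition in_F2 :: "('a::finite \<Rightarrow> real) \<Rightarrow> nat \<Rightarrow> (nat \<Rightarrow> 'a \<Rightarrow> bool list) \<Rightarrow> (nat \<Rightarrow> 'a \<Rightarrow> nat) \<Rightarrow> bool" where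
  "in_F2 \<mu> m f \<tau> \<longleftrightarrow> code_tuple m f \<tau> \<and> regular \<mu> m \<tau> \<and> two_dec m f \<tau> \<and>
     (\<forall>i<m. card (Pset f \<tau> 2 i []) \<ge> 3)"

end

theory Submission
  imports Defs
begin

text \<open>If two symbols shared a codeword in table i, decodability would make the sets of
  2-bit continuations of their successor tables disjoint; each has at least 3 of the only
  4 binary words of length 2, which is impossible.\<close>

lemma finite_bool_lists_length: "finite {c::bool list. length c = k}"
  using finite_lists_length_eq[of "UNIV :: bool set" k] by simp

lemma card_bool_lists_length: "card {c::bool list. length c = k} = 2 ^ k"
  using card_lists_length_eq[of "UNIV :: bool set" k] by simp

lemma Pset_subset_lists_length: "Pset f \<tau> k i b \<subseteq> {c. length c = k}"
  unfolding Pset_def by auto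

lemma card_Pset_add_le:
  assumes "Pset f \<tau> k i b \<inter> Pset f \<tau> k j b' = {}"
  shows "card (Pset f \<tau> k i b) + card (Pset f \<tau> k j b') \<le> 2 ^ k"
proof -
  have fin: "finite (Pset f \<tau> k i b)" "finite (Pset f \<tau> k j b')"
    using finite_subset[OF Pset_subset_lists_length finite_bool_lists_length] by blast+
  have "card (Pset f \<tau> k i b) + card (Pset f \<tau> k j b') = card (Pset f \<tau> k i b \<union> Pset f \<tau> k j b')"
    using card_Un_disjoint[OF fin assms] by simp
  also have "\<dots> \<le> card {c::bool list. length c = k}"
    by (intro card_mono finite_bool_lists_length Un_least Pset_subset_lists_length)
  finally show ?thesis by (simp add: card_bool_lists_length)
qed

lemma two_dec_Pset_disjoint:
  assumes "two_dec m f \<tau>" "i < m" "s \<noteq> s'" "f i s = f i s'"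
  shows "Pset f \<tau> 2 (\<tau> i s) [] \<inter> Pset f \<tau> 2 (\<tau> i s') [] = {}"
  using assms unfolding two_dec_def by blast

theorem lemma23:
  fixes \<mu> :: "'a::finite \<Rightarrow> real"
    and f :: "nat \<Rightarrow> 'a \<Rightarrow> bool list" and \<tau> :: "nat \<Rightarrow> 'a \<Rightarrow> nat" and m i :: nat
  assumes "card (UNIV :: 'a set) \<ge> 2"
    and "\<forall>s. 0 < \<mu> s \<and> \<mu> s \<le> 1" and "(\<Sum>s\<in>UNIV. \<mu> s) = 1"
    and "in_F2 \<mu> m f \<tau>"
    and "i < m"
  shows "inj (f i)"
proof (rule injI, rule ccontr)
  fix s s' assume eq: "f i s = f i s'" and ne: "s \<noteq> s'"
  have tuple: "code_tuple m f \<tau>" and dec: "two_dec m f \<tau>"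
    and big: "\<forall>j<m. card (Pset f \<tau> 2 j []) \<ge> 3"
    using assms(4) unfolding in_F2_def by auto
  have "\<tau> i s < m" "\<tau> i s' < m"
    using tuple \<open>i < m\<close> unfolding code_tuple_def by auto
  then have "card (Pset f \<tau> 2 (\<tau> i s) []) \<ge> 3" "card (Pset f \<tau> 2 (\<tau> i s') []) \<ge> 3"
    using big by blast+
  moreover have "card (Pset f \<tau> 2 (\<tau> i s) []) + card (Pset f \<tau> 2 (\<tau> i s') []) \<le> 4"
    using card_Pset_add_le[OF two_dec_Pset_disjoint[OF dec \<open>i < m\<close> ne eq]] by simp
  ultimately show False by linarith
qed

end
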